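(* Assume $M=m-2n\notin-2\mathbb{N}$. Let $H\subseteq\mathcal{P}$ be a subspace with $\dim H>1$ which is invariant and irreducible under the action of $G=SO(m)\times Sp(2n)$. Then every integration over the supersphere $T$ satisfies $T(f)=0$ for all $f\in H$.
   Context: Let $m,n\ge0$ be integers, $\mathbb{N}=\{0,1,2,\dots\}$. $\mathcal{P}=\mathbb{R}[x_1,\dots,x_m]\otimes\Lambda_{2n}$ is the real algebra generated by commuting $x_1,\dots,x_m$ and anticommuting $\theta_1,\dots,\theta_{2n}$ with $x_i\theta_j=\theta_jx_i$. $x^2=\sum_{j=1}^n\theta_{2j-1}\theta_{2j}-\sum_{j=1}^m x_j^2$. $Sp(2n)=\{D\in GL_{2n}(\mathbb{R}):D^TJD=J\}$ with $J$ block diagonal with $n$ blocks $\begin{pmatrix}0&1/2\\-1/2&0\end{pmatrix}$; $g=(A,D)\in SO(m)\times Sp(2n)$ acts on $f\in\mathcal{P}$ by $f\mapsto f(g\cdot x)$, the image under the algebra automorphism $x_i\mapsto\sum_kA_{ik}x_k$, $\theta_j\mapsto\sum_lD_{jl}\theta_l$. An integration over the supersphere is a linear functional $T:\mathcal{P}\to\mathbb{R}$ such that for all $f\in\mathcal{P}$: (1) $T(x^2f)=-T(f)$; (2) $T(f(g\cdot x))=T(f)$ for all $g\in SO(m)\times Sp(2n)$. *)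

theory Defs
  imports Main "HOL-Library.Function_Algebras" "Jordan_Normal_Form.Determinant"
begin

(* Basis monomials x^alpha theta_S, 0-based indices: x_0..x_{m-1}, theta_0..theta_{2n-1};
   theta_S is the product of theta_j, j in S, in increasing order of j. *)
type_synonym smono = "(nat \<Rightarrow> nat) \<times> nat set"
type_synonym spoly = "smono \<Rightarrow> real"

definition valid_mono :: "nat \<Rightarrow> nat \<Rightarrow> smono \<Rightarrow> bool" where
  "valid_mono m n k \<longleftrightarrow> (\<forall>i\<ge>m. fst k i = 0) \<and> snd k \<subseteq> {..<2*n}"

definition supp :: "spoly \<Rightarrow> smono set" where
  "supp f = {k. f k \<noteq> 0}"

definition Pspace :: "nat \<Rightarrow> nat \<Rightarrow> spoly set" where
  "Pspace m n = {f. finite (supp f) \<and> (\<forall>k\<in>supp f. valid_mono m n k)}"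

definition mono_sign :: "nat set \<Rightarrow> nat set \<Rightarrow> real" where
  "mono_sign S T = (-1) ^ card {(s,t). s \<in> S \<and> t \<in> T \<and> t < s}"

definition mono_mult :: "smono \<Rightarrow> smono \<Rightarrow> smono option" where
  "mono_mult a b = (if snd a \<inter> snd b = {} then Some (\<lambda>i. fst a i + fst b i, snd a \<union> snd b) else None)"

definition smult :: "spoly \<Rightarrow> spoly \<Rightarrow> spoly" where
  "smult f g = (\<lambda>k. \<Sum>p\<in>supp f \<times> supp g.
      (case mono_mult (fst p) (snd p) of
         None \<Rightarrow> 0
       | Some k' \<Rightarrow> if k' = k then mono_sign (snd (fst p)) (snd (snd p)) * f (fst p) * g (snd p) else 0))"

definition sone :: spoly where
  "sone = (\<lambda>k. if k = (\<lambda>_. 0, {}) then 1 else 0)"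

definition Xv :: "nat \<Rightarrow> spoly" where
  "Xv i = (\<lambda>k. if k = (\<lambda>j. if j = i then 1 else 0, {}) then 1 else 0)"

definition Th :: "nat \<Rightarrow> spoly" where
  "Th j = (\<lambda>k. if k = (\<lambda>_. 0, {j}) then 1 else 0)"

fun spow :: "spoly \<Rightarrow> nat \<Rightarrow> spoly" where
  "spow f 0 = sone"
| "spow f (Suc k) = smult f (spow f k)"

(* x^2 = sum_j theta_{2j-1} theta_{2j} - sum_j x_j^2  (1-based), i.e. 0-based below *)
definition xsq :: "nat \<Rightarrow> nat \<Rightarrow> spoly" where
  "xsq m n = (\<lambda>k. (\<Sum>j<n. smult (Th (2*j)) (Th (2*j+1)) k) - (\<Sum>i<m. smult (Xv i) (Xv i) k))"

definition lin_x :: "nat \<Rightarrow> real mat \<Rightarrow> nat \<Rightarrow> spoly" where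
  "lin_x m A i = (\<lambda>k. \<Sum>l<m. A $$ (i,l) * Xv l k)"

definition lin_th :: "nat \<Rightarrow> real mat \<Rightarrow> nat \<Rightarrow> spoly" where
  "lin_th n D j = (\<lambda>k. \<Sum>l<2*n. D $$ (j,l) * Th l k)"

(* image of the basis monomial x^alpha theta_S under x_i -> sum_k A_ik x_k, theta_j -> sum_l D_jl theta_l *)
definition mono_image :: "nat \<Rightarrow> nat \<Rightarrow> real mat \<Rightarrow> real mat \<Rightarrow> smono \<Rightarrow> spoly" where
  "mono_image m n A D k =
     smult (foldr smult (map (\<lambda>i. spow (lin_x m A i) (fst k i)) [0..<m]) sone)
           (foldr smult (map (lin_th n D) (sorted_list_of_set (snd k))) sone)"

(* f(g.x) for g = (A,D) *)
definition act :: "nat \<Rightarrow> nat \<Rightarrow> real mat \<Rightarrow> real mat \<Rightarrow> spoly \<Rightarrow> spoly" where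
  "act m n A D f = (\<lambda>k. \<Sum>k0\<in>supp f. f k0 * mono_image m n A D k0 k)"

definition inSO :: "nat \<Rightarrow> real mat \<Rightarrow> bool" where
  "inSO m A \<longleftrightarrow> A \<in> carrier_mat m m \<and> transpose_mat A * A = 1\<^sub>m m \<and> det A = 1"

definition Jmat :: "nat \<Rightarrow> real mat" where
  "Jmat n = mat (2*n) (2*n) (\<lambda>(i,j). if even i \<and> j = i + 1 then 1/2
                                      else if odd i \<and> i = j + 1 then -1/2 else 0)"

definition inSp :: "nat \<Rightarrow> real mat \<Rightarrow> bool" where
  "inSp n D \<longleftrightarrow> D \<in> carrier_mat (2*n) (2*n) \<and> det D \<noteq> 0 \<and>
                 transpose_mat D * Jmat n * D = Jmat n"

definition is_subspace :: "nat \<Rightarrow> nat \<Rightarrow> spoly set \<Rightarrow> bool" where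
  "is_subspace m n H \<longleftrightarrow> H \<subseteq> Pspace m n \<and> (\<lambda>_. 0) \<in> H \<and>
     (\<forall>f\<in>H. \<forall>g\<in>H. \<forall>a b::real. (\<lambda>k. a * f k + b * g k) \<in> H)"

definition G_invariant :: "nat \<Rightarrow> nat \<Rightarrow> spoly set \<Rightarrow> bool" where
  "G_invariant m n H \<longleftrightarrow> (\<forall>A D f. inSO m A \<and> inSp n D \<and> f \<in> H \<longrightarrow> act m n A D f \<in> H)"

definition G_irreducible :: "nat \<Rightarrow> nat \<Rightarrow> spoly set \<Rightarrow> bool" where
  "G_irreducible m n H \<longleftrightarrow> H \<noteq> {\<lambda>_. 0} \<and>
     (\<forall>K. is_subspace m n K \<and> K \<subseteq> H \<and> G_invariant m n K \<longrightarrow> K = {\<lambda>_. 0} \<or> K = H)"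

definition dim_gt_one :: "spoly set \<Rightarrow> bool" where
  "dim_gt_one H \<longleftrightarrow> (\<exists>f\<in>H. \<exists>g\<in>H. \<forall>a b::real. (\<lambda>k. a * f k + b * g k) = (\<lambda>_. 0) \<longrightarrow> a = 0 \<and> b = 0)"

definition supersphere_integration :: "nat \<Rightarrow> nat \<Rightarrow> (spoly \<Rightarrow> real) \<Rightarrow> bool" where
  "supersphere_integration m n T \<longleftrightarrow>
     (\<forall>f\<in>Pspace m n. \<forall>g\<in>Pspace m n. \<forall>a b::real. T (\<lambda>k. a * f k + b * g k) = a * T f + b * T g) \<and>
     (\<forall>f\<in>Pspace m n. T (smult (xsq m n) f) = - T f) \<and>
     (\<forall>f\<in>Pspace m n. \<forall>A D. inSO m A \<and> inSp n D \<longrightarrow> T (act m n A D f) = T f)"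

end

theory Submission
  imports Defs
begin

text \<open>The restriction of T to H is a G-invariant linear functional, so its kernel is a
G-invariant subspace of H. Since dim H > 1, a linear functional on H cannot be injective, so by
irreducibility the kernel is all of H.\<close>

definition linear_functional_on :: "spoly set \<Rightarrow> (spoly \<Rightarrow> real) \<Rightarrow> bool" where
  "linear_functional_on V T \<longleftrightarrow>
     (\<forall>f\<in>V. \<forall>g\<in>V. \<forall>a b. T (\<lambda>k. a * f k + b * g k) = a * T f + b * T g)"

definition G_invariant_functional :: "nat \<Rightarrow> nat \<Rightarrow> (spoly \<Rightarrow> real) \<Rightarrow> bool" where
  "G_invariant_functional m n T \<longleftrightarrow>
     (\<forall>f\<in>Pspace m n. \<forall>A D. inSO m A \<and> inSp n D \<longrightarrow> T (act m n A D f) = T f)"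

lemma linear_functional_onD:
  "linear_functional_on V T \<Longrightarrow> f \<in> V \<Longrightarrow> g \<in> V \<Longrightarrow>
    T (\<lambda>k. a * f k + b * g k) = a * T f + b * T g"
  unfolding linear_functional_on_def by blast

lemma supersphere_integration_linear:
  "supersphere_integration m n T \<Longrightarrow> linear_functional_on (Pspace m n) T"
  unfolding supersphere_integration_def linear_functional_on_def by blast

lemma supersphere_integration_G_invariant:
  "supersphere_integration m n T \<Longrightarrow> G_invariant_functional m n T"
  unfolding supersphere_integration_def G_invariant_functional_def by blast

lemma linear_functional_on_zero:
  assumes "linear_functional_on V T" and "(\<lambda>_. 0) \<in> V"
  shows "T (\<lambda>_. 0) = 0"
proof -
  have "T (\<lambda>k. 0 * (\<lambda>_. 0::real) k + 0 * (\<lambda>_. 0::real) k) = 0 * T (\<lambda>_. 0) + 0 * T (\<lambda>_. 0)"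
    using linear_functional_onD[OF assms(1,2,2)] .
  then show ?thesis by simp
qed

lemma is_subspace_kernel:
  assumes "is_subspace m n H" and "linear_functional_on (Pspace m n) T"
  shows "is_subspace m n {f\<in>H. T f = 0}"
proof -
  have "T (\<lambda>_. 0) = 0"
    using assms linear_functional_on_zero unfolding is_subspace_def by blast
  moreover have "T (\<lambda>k. a * f k + b * g k) = 0"
    if "f \<in> H" "g \<in> H" "T f = 0" "T g = 0" for f g a b
  proof -
    have "f \<in> Pspace m n" "g \<in> Pspace m n"
      using that(1,2) assms(1) unfolding is_subspace_def by auto
    then show ?thesis
      using linear_functional_onD[OF assms(2)] that(3,4) by simp
  qed
  ultimately show ?thesis
    using assms(1) unfolding is_subspace_def by auto
qed

lemma G_invariant_kernel:
  assumes "G_invariant m n H" and "H \<subseteq> Pspace m n" and "G_invariant_functional m n T"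
  shows "G_invariant m n {f\<in>H. T f = 0}"
  using assms unfolding G_invariant_def G_invariant_functional_def by auto

lemma kernel_nontrivial_if_dim_gt_one:
  assumes "is_subspace m n H" and "dim_gt_one H" and "linear_functional_on (Pspace m n) T"
  obtains h where "h \<in> H" "h \<noteq> (\<lambda>_. 0)" "T h = 0"
proof -
  obtain f g where f: "f \<in> H" and g: "g \<in> H"
    and indep: "\<And>a b. (\<lambda>k. a * f k + b * g k) = (\<lambda>_. 0) \<Longrightarrow> a = 0 \<and> b = 0"
    using assms(2) unfolding dim_gt_one_def by blast
  have fg: "f \<in> Pspace m n" "g \<in> Pspace m n"
    using f g assms(1) unfolding is_subspace_def by auto
  consider "T f = 0" | "T f \<noteq> 0" by blast
  then show ?thesis
  proof cases
    case 1
    have "f \<noteq> (\<lambda>_. 0)"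
      using indep[of 1 0] by auto
    with 1 f that show ?thesis by blast
  next
    case 2
    define h where "h = (\<lambda>k. T g * f k + (- T f) * g k)"
    have "h \<in> H"
      using f g assms(1) unfolding h_def is_subspace_def by blast
    moreover have "T h = 0"
      using linear_functional_onD[OF assms(3) fg, of "T g" "- T f"] unfolding h_def by simp
    moreover have "h \<noteq> (\<lambda>_. 0)"
      using indep[of "T g" "- T f"] 2 unfolding h_def by auto
    ultimately show ?thesis using that by blast
  qed
qed

theorem mainTheorem7:
  fixes m n :: nat and H :: "spoly set" and T :: "spoly \<Rightarrow> real"
  assumes "\<not> (\<exists>k::nat. int m - 2 * int n = - 2 * int k)"
    and "is_subspace m n H" and "dim_gt_one H"
    and "G_invariant m n H" and "G_irreducible m n H"
    and "supersphere_integration m n T"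
  shows "\<forall>f\<in>H. T f = 0"
proof -
  let ?K = "{f\<in>H. T f = 0}"
  have lin: "linear_functional_on (Pspace m n) T"
    using assms(6) by (rule supersphere_integration_linear)
  have "is_subspace m n ?K"
    using assms(2) lin by (rule is_subspace_kernel)
  moreover have "G_invariant m n ?K"
    using assms(4,6) assms(2)[unfolded is_subspace_def]
    by (blast intro: G_invariant_kernel supersphere_integration_G_invariant)
  ultimately have "?K = {\<lambda>_. 0} \<or> ?K = H"
    using assms(5) unfolding G_irreducible_def by blast
  moreover obtain h where "h \<in> H" "h \<noteq> (\<lambda>_. 0)" "T h = 0"
    using assms(2,3) lin by (rule kernel_nontrivial_if_dim_gt_one)
  ultimately have "?K = H" by blast
  then show ?thesis by blast
qed

end
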